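(* Let $q$ be an odd prime power, $m=2t$, and $n=\frac{q^m+1}{2}$. (1) If $m\ge4$, then every integer $i$ with $\frac{q^t+1}{2}\le i\le q^t+1$, $i\not\equiv0\pmod q$ and $i\notin\{\frac{q^t+1}{2},q^t+1\}$ is a coset leader modulo $n$ with $|C_i|=2m$, while $\frac{q^t+1}{2}$ and $q^t+1$ are not coset leaders modulo $n$. (2) If $m\ge8$, then every integer $i$ with $\frac{q^t+1}{2}\le i\le\frac{q^{t+1}-1}{2}$, $i\not\equiv0\pmod q$ and $i\notin X_1\cup X_2\cup X_3\cup X_4\cup X_5$ is a coset leader modulo $n$ with $|C_i|=2m$, while no element of $X_1\cup\dots\cup X_5$ in this range with $i\not\equiv 0\pmod q$ is a coset leader, where (all parameters integers) $X_1=\{aq^t+b:1\le b\le a\le\frac{q-1}{2}\}$, $X_2=\{aq^t-b:1\le b<a\le\frac{q-1}{2}\}$, $X_3=\{aq^t+\frac{q^t-1}{2}+b,\ aq^t+\frac{q^t+1}{2}-b:1\le b\le a<\frac{q-1}{2}\}$, $X_4=\{a(q^t+1)+\frac{q^t+1}{2}:0\le a<\frac{q-1}{2}\}$, $X_5=\{i:\frac{q^{t+1}-q^2}{2}+1\le i\le\frac{q^{t+1}-1}{2},\ q\nmid i\}$.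
   Context: For $0\le s\le n-1$, $C_s=\{sq^i\bmod n:i\ge0\}$ is the $q$-cyclotomic coset of $s$ modulo $n$; its least element is its coset leader. *)

theory Defs
  imports "HOL-Computational_Algebra.Primes"
begin

definition cyc_coset :: "nat \<Rightarrow> nat \<Rightarrow> nat \<Rightarrow> nat set" where
  "cyc_coset q n s = {s * q ^ i mod n | i. True}"

definition coset_leader :: "nat \<Rightarrow> nat \<Rightarrow> nat \<Rightarrow> bool" where
  "coset_leader q n s \<longleftrightarrow> s < n \<and> s = Min (cyc_coset q n s)"

definition X1 :: "nat \<Rightarrow> nat \<Rightarrow> nat set" where
  "X1 q t = {a * q ^ t + b | a b. 1 \<le> b \<and> b \<le> a \<and> a \<le> (q - 1) div 2}"

definition X2 :: "nat \<Rightarrow> nat \<Rightarrow> nat set" where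
  "X2 q t = {a * q ^ t - b | a b. 1 \<le> b \<and> b < a \<and> a \<le> (q - 1) div 2}"

definition X3 :: "nat \<Rightarrow> nat \<Rightarrow> nat set" where
  "X3 q t = {a * q ^ t + (q ^ t - 1) div 2 + b | a b. 1 \<le> b \<and> b \<le> a \<and> a < (q - 1) div 2}
          \<union> {a * q ^ t + (q ^ t + 1) div 2 - b | a b. 1 \<le> b \<and> b \<le> a \<and> a < (q - 1) div 2}"

definition X4 :: "nat \<Rightarrow> nat \<Rightarrow> nat set" where
  "X4 q t = {a * (q ^ t + 1) + (q ^ t + 1) div 2 | a. a < (q - 1) div 2}"

definition X5 :: "nat \<Rightarrow> nat \<Rightarrow> nat set" where
  "X5 q t = {i. (q ^ (t + 1) - q ^ 2) div 2 + 1 \<le> i \<and> i \<le> (q ^ (t + 1) - 1) div 2 \<and> \<not> q dvd i}"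

end

(*
  Write Q = q^t and N = Q^2 + 1 = 2n. Doubling identifies the cosets modulo n with the cosets of
  even residues modulo N, so we study x = 2i modulo N. Since q^(2t) = Q^2 is -1 modulo N, the coset
  of x consists of the residues r_j = x q^j mod N, j < 2t, and their negatives N - r_j: x is a
  leader with a coset of size 4t when every r_j with 0 < j < 2t lies strictly between x and N - x,
  and x is no leader when some r_j lies outside [x, N - x]. Multiplication by Q acts on base-Q
  digits by (u Q + v) Q = v Q - u (mod N). For x < q Q this leaves r_(t-1), r_t and r_(t+1) to be
  checked: r_t drops below x when v <= u (X1, X3, X4) and exceeds N - x when u + v > Q (X2, X3),
  r_(t-1) exceeds N - x on X5, and r_(t+1) is always inside.
*)
theory Submission
  imports Defs "HOL-Number_Theory.Cong"
begin

section \<open>Cyclotomic cosets\<close>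

lemma cyc_coset_eq_range: "cyc_coset q n s = range (\<lambda>k. s * q ^ k mod n)"
  unfolding cyc_coset_def by auto

lemma finite_cyc_coset: "0 < n \<Longrightarrow> finite (cyc_coset q n s)"
  unfolding cyc_coset_eq_range by (rule finite_subset[of _ "{..<n}"]) auto

lemma not_coset_leader_if_less:
  assumes "0 < n" "s * q ^ k mod n < s"
  shows "\<not> coset_leader q n s"
proof
  assume "coset_leader q n s"
  moreover have "Min (cyc_coset q n s) \<le> s * q ^ k mod n"
    using finite_cyc_coset[OF assms(1)] by (rule Min_le) (auto simp: cyc_coset_def)
  ultimately show False
    using assms(2) unfolding coset_leader_def by linarith
qed

lemma mult_power_mod_antipode:
  fixes n q s k m :: nat
  assumes "n dvd q ^ m + 1"
  shows "s * q ^ (k + m) mod n = (n - s * q ^ k mod n) mod n"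
proof -
  define r where "r = s * q ^ k mod n"
  have "0 < n"
    using assms by (cases n) auto
  then have "r \<le> n"
    unfolding r_def by simp
  have "s * q ^ (k + m) + s * q ^ k = s * q ^ k * (q ^ m + 1)"
    by (simp add: power_add algebra_simps)
  also have "n dvd \<dots>"
    using assms by (rule dvd_mult)
  finally have "[s * q ^ (k + m) + s * q ^ k = 0] (mod n)"
    by (simp add: cong_0_iff)
  then have "[s * q ^ (k + m) + r = (n - r) + r] (mod n)"
    using \<open>r \<le> n\<close> unfolding r_def by (simp add: cong_def mod_add_right_eq)
  then have "[s * q ^ (k + m) = n - r] (mod n)"
    by (simp add: cong_add_rcancel_nat)
  then show ?thesis unfolding r_def cong_def .
qed

lemma not_coset_leader_if_antipode_less:
  assumes "n dvd q ^ m + 1" "n < s * q ^ k mod n + s"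
  shows "\<not> coset_leader q n s"
proof (cases "s < n")
  case True
  then have "s * q ^ (k + m) mod n = n - s * q ^ k mod n"
    using mult_power_mod_antipode[OF assms(1)] assms(2) by simp
  moreover have "s * q ^ k mod n < n"
    using True by simp
  ultimately have "s * q ^ (k + m) mod n < s"
    using assms(2) by linarith
  then show ?thesis
    using True by (intro not_coset_leader_if_less) auto
qed (simp add: coset_leader_def)

lemma cong_mult_power_mod_period:
  fixes n q s P k :: nat
  assumes "[s * q ^ P = s] (mod n)"
  shows "[s * q ^ k = s * q ^ (k mod P)] (mod n)"
proof -
  have multiple: "[s * q ^ (P * c) = s] (mod n)" for c
  proof (induction c)
    case (Suc c)
    have "s * q ^ (P * Suc c) = s * q ^ P * q ^ (P * c)"
      by (simp add: power_add)
    also have "[\<dots> = s * q ^ (P * c)] (mod n)"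
      using assms by (rule cong_scalar_right)
    finally show ?case using Suc.IH by (rule cong_trans)
  qed simp
  have "s * q ^ k = s * q ^ (P * (k div P)) * q ^ (k mod P)"
    by (metis div_mult_mod_eq mult.assoc mult.commute power_add)
  also have "[\<dots> = s * q ^ (k mod P)] (mod n)"
    using multiple by (rule cong_scalar_right)
  finally show ?thesis .
qed

lemma cyc_coset_eq_image_period:
  assumes "0 < P" "[s * q ^ P = s] (mod n)"
  shows "cyc_coset q n s = (\<lambda>k. s * q ^ k mod n) ` {..<P}"
proof -
  have "s * q ^ k mod n \<in> (\<lambda>k. s * q ^ k mod n) ` {..<P}" for k
    using cong_mult_power_mod_period[OF assms(2), of k] assms(1)
    by (auto simp: cong_def)
  then show ?thesis unfolding cyc_coset_eq_range by auto
qed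

lemma card_cyc_coset_eq_period:
  assumes "coprime q n" "0 < P" "[s * q ^ P = s] (mod n)"
    and aperiodic: "\<And>j. 0 < j \<Longrightarrow> j < P \<Longrightarrow> \<not> [s * q ^ j = s] (mod n)"
  shows "card (cyc_coset q n s) = P"
proof -
  have distinct: "s * q ^ a mod n \<noteq> s * q ^ b mod n" if "a < b" "b < P" for a b
  proof
    assume "s * q ^ a mod n = s * q ^ b mod n"
    moreover have "s * q ^ b = s * q ^ (b - a) * q ^ a"
      using \<open>a < b\<close> by (metis le_add_diff_inverse2 less_imp_le mult.assoc power_add)
    ultimately have "[s * q ^ (b - a) * q ^ a = s * q ^ a] (mod n)"
      by (simp add: cong_def)
    then have "[s * q ^ (b - a) = s] (mod n)"
      using assms(1) by (simp add: cong_mult_rcancel_nat)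
    then show False using aperiodic[of "b - a"] that by simp
  qed
  have "inj_on (\<lambda>k. s * q ^ k mod n) {..<P}"
  proof (rule inj_onI)
    fix a b
    assume "a \<in> {..<P}" "b \<in> {..<P}" "s * q ^ a mod n = s * q ^ b mod n"
    then show "a = b"
      using distinct[of a b] distinct[of b a] by (cases a b rule: linorder_cases) auto
  qed
  then show ?thesis
    by (simp add: cyc_coset_eq_image_period[OF assms(2,3)] card_image)
qed

lemma coprime_if_dvd_power_plus_one:
  fixes q n m :: nat
  assumes "n dvd q ^ m + 1" "0 < m"
  shows "coprime q n"
proof -
  have "coprime (q ^ m) (q ^ m + 1)"
    by simp
  then have "coprime q (q ^ m + 1)"
    using coprime_power_left_iff[of q m "q ^ m + 1"] assms(2) by simp
  then show ?thesis
    by (rule coprime_divisors[OF dvd_refl assms(1)])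
qed

lemma mult_power_mod_antipodal_bounds:
  fixes q n s m k :: nat
  assumes n: "n dvd q ^ m + 1" and "0 < s" "2 * s < n" "k < 2 * m"
    and inside: "\<And>j. 0 < j \<Longrightarrow> j < m \<Longrightarrow> s * q ^ j mod n \<in> {s<..<n - s}"
  shows "s \<le> s * q ^ k mod n \<and> (s * q ^ k mod n = s \<longleftrightarrow> k = 0)"
proof (cases "k < m")
  case True
  then show ?thesis
    using inside[of k] assms(3) by (cases "k = 0") auto
next
  case False
  define j where "j = k - m"
  have k: "k = j + m" "j < m"
    using False assms(4) unfolding j_def by auto
  have antipode: "s * q ^ k mod n = (n - s * q ^ j mod n) mod n"
    unfolding k(1) using n by (rule mult_power_mod_antipode)
  show ?thesis
  proof (cases "j = 0")
    case True
    have "s < n - s" "n - s < n"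
      using assms(2,3) by linarith+
    then show ?thesis
      using antipode k True by simp
  next
    case False
    then have "s < s * q ^ j mod n" "s * q ^ j mod n < n - s"
      using inside k(2) by auto
    then have "s < s * q ^ k mod n"
      using antipode by (simp add: less_diff_conv)
    then show ?thesis
      using k False by simp
  qed
qed

lemma coset_leader_if_strictly_inside:
  fixes q n s m :: nat
  assumes n: "n dvd q ^ m + 1" and "0 < m" "0 < s" "2 * s < n"
    and inside: "\<And>j. 0 < j \<Longrightarrow> j < m \<Longrightarrow> s * q ^ j mod n \<in> {s<..<n - s}"
  shows "coset_leader q n s \<and> card (cyc_coset q n s) = 2 * m"
proof -
  define r where "r k = s * q ^ k mod n" for k
  have bounds: "s \<le> r k \<and> (r k = s \<longleftrightarrow> k = 0)" if "k < 2 * m" for k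
    unfolding r_def using n assms(3,4) that inside by (rule mult_power_mod_antipodal_bounds)
  have "r m = n - s"
    unfolding r_def using mult_power_mod_antipode[OF n, of s 0] assms(3,4) by simp
  then have period: "[s * q ^ (2 * m) = s] (mod n)"
    using mult_power_mod_antipode[OF n, of s m] assms(3,4) unfolding r_def cong_def
    by (simp add: mult_2)
  have coset: "cyc_coset q n s = r ` {..<2 * m}"
    unfolding r_def using assms(2) period by (simp add: cyc_coset_eq_image_period)
  have "s \<in> r ` {..<2 * m}"
    unfolding r_def using assms(2,4) by (intro rev_image_eqI[of 0]) auto
  then have "s = Min (cyc_coset q n s)"
    unfolding coset using bounds by (intro Min_eqI[symmetric]) auto
  then have "coset_leader q n s"
    using assms(4) unfolding coset_leader_def by simp
  moreover have "card (cyc_coset q n s) = 2 * m"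
  proof (rule card_cyc_coset_eq_period[OF _ _ period])
    show "coprime q n"
      using n assms(2) by (rule coprime_if_dvd_power_plus_one)
    show "\<not> [s * q ^ j = s] (mod n)" if "0 < j" "j < 2 * m" for j
      using bounds[OF that(2)] that(1) assms(4) unfolding r_def cong_def by simp
  qed (use assms(2) in simp)
  ultimately show ?thesis ..
qed

lemma cyc_coset_mult:
  "cyc_coset q (c * n) (c * s) = (\<lambda>y. c * y) ` cyc_coset q n s"
  unfolding cyc_coset_def by (auto simp: mult.assoc mod_mult_mult1)

lemma coset_leader_mult_iff:
  assumes "0 < c"
  shows "coset_leader q (c * n) (c * s) \<longleftrightarrow> coset_leader q n s"
proof (cases "0 < n")
  case True
  have "Min (cyc_coset q (c * n) (c * s)) = c * Min (cyc_coset q n s)"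
    unfolding cyc_coset_mult
    by (rule mono_Min_commute[symmetric])
      (use finite_cyc_coset[OF True] in \<open>auto simp: mono_def cyc_coset_def\<close>)
  then show ?thesis
    using assms unfolding coset_leader_def by simp
qed (simp add: coset_leader_def)

lemma card_cyc_coset_mult:
  "0 < c \<Longrightarrow> card (cyc_coset q (c * n) (c * s)) = card (cyc_coset q n s)"
  unfolding cyc_coset_mult by (simp add: card_image inj_on_def)

section \<open>Residues modulo \<open>q ^ (2 * t) + 1\<close>\<close>

lemma mult_mod_square_plus_one:
  fixes Q u v :: nat
  assumes "u < Q" "0 < v" "v \<le> Q"
  shows "(u * Q + v) * Q mod (Q * Q + 1) = v * Q - u"
proof -
  have "1 * Q \<le> v * Q"
    using assms(2) by (intro mult_le_mono1) simp
  then have "u < v * Q"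
    using assms(1) by linarith
  then have "(u * Q + v) * Q = u * (Q * Q + 1) + (v * Q - u)"
    by (simp add: algebra_simps)
  moreover have "v * Q \<le> Q * Q"
    using assms(3) by simp
  then have "v * Q - u < Q * Q + 1"
    by linarith
  ultimately show ?thesis
    by (simp only: mod_mult_self3 mod_less)
qed

lemma square_power_plus_one_dvd: "(q :: nat) ^ t * q ^ t + 1 dvd q ^ (2 * t) + 1"
  unfolding mult_2 power_add by simp

lemma not_coset_leader_if_low_digit_le:
  fixes q t u v :: nat
  assumes "0 < v" "v \<le> u" "u < q ^ t"
  shows "\<not> coset_leader q (q ^ t * q ^ t + 1) (u * q ^ t + v)"
proof (rule not_coset_leader_if_less)
  have "v * q ^ t \<le> u * q ^ t"
    using assms(2) by simp
  then have "v * q ^ t - u < u * q ^ t + v"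
    using assms(1) by arith
  then show "(u * q ^ t + v) * q ^ t mod (q ^ t * q ^ t + 1) < u * q ^ t + v"
    using mult_mod_square_plus_one[of u "q ^ t" v] assms by simp
qed simp

lemma not_coset_leader_if_digit_sum_gt:
  fixes q t u v :: nat
  assumes "0 < v" "v < q ^ t" "u < q ^ t" "q ^ t < u + v"
  shows "\<not> coset_leader q (q ^ t * q ^ t + 1) (u * q ^ t + v)"
proof (rule not_coset_leader_if_antipode_less)
  show "q ^ t * q ^ t + 1 dvd q ^ (2 * t) + 1"
    by (rule square_power_plus_one_dvd)
  define Q where "Q = q ^ t"
  have "(Q + 1) * Q \<le> (u + v) * Q"
    using assms(4) unfolding Q_def by (intro mult_le_mono1) simp
  moreover have "1 * Q \<le> v * Q"
    using assms(1) by (intro mult_le_mono1) simp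
  ultimately have "Q * Q + 1 < v * Q - u + (u * Q + v)"
    using assms(1,3) unfolding Q_def[symmetric] add_mult_distrib by linarith
  then show "q ^ t * q ^ t + 1 < (u * q ^ t + v) * q ^ t mod (q ^ t * q ^ t + 1) + (u * q ^ t + v)"
    using mult_mod_square_plus_one[of u Q v] assms unfolding Q_def by simp
qed

lemma mult_power_mod_inside_low:
  fixes q t x j :: nat
  assumes "1 < q" "0 < x" "0 < j" "j < t" "x * q ^ (t - 1) + x < q ^ t * q ^ t + 1"
  shows "x * q ^ j mod (q ^ t * q ^ t + 1) \<in> {x<..<q ^ t * q ^ t + 1 - x}"
proof -
  have le: "x * q ^ j \<le> x * q ^ (t - 1)"
    using assms(1,4) by (intro mult_le_mono2 power_increasing) auto
  have "1 < q ^ j"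
    using assms(1,3) by (rule one_less_power)
  then have "x * 1 < x * q ^ j"
    using assms(2) by (intro mult_less_mono2) auto
  moreover have "x * q ^ j + x < q ^ t * q ^ t + 1"
    using le assms(5) by linarith
  ultimately show ?thesis
    by (simp add: less_diff_conv)
qed

lemma mult_mod_square_plus_one_inside:
  fixes Q x :: nat
  assumes "x div Q < x mod Q" "x div Q + x mod Q < Q" "2 * (x div Q) + 2 \<le> Q"
  shows "x * Q mod (Q * Q + 1) \<in> {x<..<Q * Q + 1 - x}"
proof -
  define u where "u = x div Q"
  define d where "d = x mod Q - u"
  have x: "x = u * Q + (u + d)" and "0 < d" and "u + (u + d) < Q"
    using assms(1,2) unfolding u_def d_def by simp_all
  have residue: "x * Q mod (Q * Q + 1) = (u + d) * Q - u"
    unfolding x using \<open>0 < d\<close> \<open>u + (u + d) < Q\<close> by (intro mult_mod_square_plus_one) auto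
  have "d * (2 * u + 2) \<le> d * Q"
    using assms(3) unfolding u_def by (rule mult_le_mono2)
  moreover have "u \<le> d * u"
    using \<open>0 < d\<close> by simp
  ultimately have below: "x + u < (u + d) * Q"
    unfolding x add_mult_distrib add_mult_distrib2 using \<open>0 < d\<close> by linarith
  then have lower: "x < (u + d) * Q - u"
    by linarith
  have "(u + (u + d) + 1) * Q \<le> Q * Q"
    using \<open>u + (u + d) < Q\<close> by (intro mult_le_mono1) simp
  then have "(u + d) * Q + x < Q * Q + 1 + u"
    unfolding x add_mult_distrib using \<open>u + (u + d) < Q\<close> by linarith
  then have upper: "(u + d) * Q - u + x < Q * Q + 1"
    using below by linarith
  show ?thesis
    using residue lower upper by simp
qed

lemma mult_power_less_square:
  fixes q t s x :: nat
  assumes "x < q * q ^ t" "s < t"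
  shows "x * q ^ s < q ^ t * q ^ t"
proof -
  have "0 < q"
    using assms(1) by (cases q) auto
  then have "x * q ^ s < q * q ^ t * q ^ s"
    using assms(1) by simp
  also have "\<dots> = q ^ Suc s * q ^ t"
    by (simp add: algebra_simps)
  also have "\<dots> \<le> q ^ t * q ^ t"
    using \<open>0 < q\<close> assms(2) by (intro mult_le_mono1 power_increasing) auto
  finally show ?thesis .
qed

lemma mod_power_pos_if_not_dvd:
  fixes q x k :: nat
  assumes "\<not> q dvd x" "0 < k"
  shows "0 < x mod q ^ k"
proof (rule ccontr)
  assume "\<not> 0 < x mod q ^ k"
  then have "q ^ k dvd x"
    by (simp add: dvd_eq_mod_eq_0)
  moreover have "q dvd q ^ k"
    using assms(2) by simp
  ultimately show False
    using assms(1) dvd_trans by blast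
qed

lemma mult_power_mod_high:
  fixes q t s x :: nat
  assumes "s < t" "\<not> q dvd x" "x * q ^ s < q ^ t * q ^ t"
  shows "x * q ^ (t + s) mod (q ^ t * q ^ t + 1) = x mod q ^ (t - s) * q ^ s * q ^ t - x div q ^ (t - s)"
proof -
  define D where "D = q ^ (t - s)"
  have "t = (t - s) + s"
    using assms(1) by simp
  then have Q: "q ^ t = D * q ^ s"
    unfolding D_def by (metis power_add)
  have "0 < q"
    using assms(1,3) by (cases q) (auto simp: power_0_left)
  then have "0 < D" "0 < q ^ s"
    unfolding D_def by simp_all
  have "0 < x mod D"
    unfolding D_def using assms(1,2) by (intro mod_power_pos_if_not_dvd) auto
  have "x mod D * q ^ s < q ^ t"
    unfolding Q using \<open>0 < D\<close> \<open>0 < q ^ s\<close> by simp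
  have decomposition: "x * q ^ s = x div D * q ^ t + x mod D * q ^ s"
    unfolding Q by (metis add_mult_distrib div_mult_mod_eq mult.assoc)
  then have "x div D * q ^ t < q ^ t * q ^ t"
    using assms(3) by linarith
  then have "x div D < q ^ t"
    by simp
  have "x * q ^ (t + s) = (x div D * q ^ t + x mod D * q ^ s) * q ^ t"
    unfolding decomposition[symmetric] by (simp add: power_add)
  also have "\<dots> mod (q ^ t * q ^ t + 1) = x mod D * q ^ s * q ^ t - x div D"
    using \<open>x div D < q ^ t\<close> \<open>0 < x mod D\<close> \<open>0 < q ^ s\<close> \<open>x mod D * q ^ s < q ^ t\<close>
    by (intro mult_mod_square_plus_one) auto
  finally show ?thesis
    unfolding D_def .
qed

lemma mult_power_mod_high_below:
  fixes q t s x :: nat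
  assumes "0 < s" "s < t" "\<not> q dvd x" "x < q * q ^ t"
  shows "x * q ^ (t + s) mod (q ^ t * q ^ t + 1) + x < q ^ t * q ^ t + 1"
proof -
  define D where "D = q ^ (t - s)"
  have "0 < q"
    using assms(4) by (cases q) auto
  have "t = (t - s) + s"
    using assms(2) by simp
  then have Q: "q ^ t = D * q ^ s"
    unfolding D_def by (metis power_add)
  have "x mod D < D"
    unfolding D_def using \<open>0 < q\<close> by simp
  then have "(x mod D + 1) * q ^ s * q ^ t \<le> q ^ t * q ^ t"
    unfolding Q by (intro mult_le_mono1) simp
  moreover have "q ^ 1 \<le> q ^ s"
    using \<open>0 < q\<close> assms(1) by (intro power_increasing) auto
  then have "q * q ^ t \<le> q ^ s * q ^ t"
    by simp
  ultimately have "x mod D * q ^ s * q ^ t + x < q ^ t * q ^ t"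
    using assms(4) unfolding add_mult_distrib by linarith
  then show ?thesis
    using mult_power_mod_high[OF assms(2,3) mult_power_less_square[OF assms(4,2)]]
    unfolding D_def by linarith
qed

lemma mult_power_mod_high_above:
  fixes q t s x :: nat
  assumes "3 \<le> q" "2 \<le> s" "s < t" "\<not> q dvd x" "x < q * q ^ t"
  shows "x < x * q ^ (t + s) mod (q ^ t * q ^ t + 1)"
proof -
  define r where "r = x mod q ^ (t - s)"
  have "0 < r"
    unfolding r_def using assms(3,4) by (intro mod_power_pos_if_not_dvd) auto
  have "3 * q \<le> q ^ 2"
    using assms(1) by (simp add: power2_eq_square)
  also have "\<dots> \<le> q ^ s"
    using assms(1,2) by (intro power_increasing) auto
  also have "\<dots> \<le> r * q ^ s"
    using \<open>0 < r\<close> by simp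
  finally have "3 * q * q ^ t \<le> r * q ^ s * q ^ t"
    by (rule mult_le_mono1)
  moreover have "x div q ^ (t - s) \<le> x"
    by simp
  ultimately have "x + x div q ^ (t - s) < r * q ^ s * q ^ t"
    using assms(5) by linarith
  then show ?thesis
    using mult_power_mod_high[OF assms(3,4) mult_power_less_square[OF assms(5,3)]]
    unfolding r_def by linarith
qed

lemma mult_power_mod_next_above:
  fixes q t x :: nat
  assumes "1 < t" "\<not> q dvd x" "x < q * q ^ t"
    and "x div q ^ (t - 1) * (q ^ (t - 1) + 1) + 1 < q * q ^ t"
  shows "x < x * q ^ (t + 1) mod (q ^ t * q ^ t + 1)"
proof -
  define P where "P = q ^ (t - 1)"
  define u where "u = x div P"
  define r where "r = x mod P"
  have "0 < r"
    unfolding r_def P_def using assms(1,2) by (intro mod_power_pos_if_not_dvd) auto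
  have "x + u = u * (P + 1) + r"
    unfolding u_def r_def by (simp add: algebra_simps)
  moreover have "r * q * q ^ t = q * q ^ t + (r - 1) * (q * q ^ t)"
    using \<open>0 < r\<close> by (cases r) (simp_all add: algebra_simps)
  moreover have "(r - 1) * 1 \<le> (r - 1) * (q * q ^ t)"
    using assms(3) by (intro mult_le_mono2) linarith
  ultimately have "x + u < r * q * q ^ t"
    using assms(4) \<open>0 < r\<close> unfolding u_def P_def by linarith
  then show ?thesis
    using mult_power_mod_high[of 1 t q x] assms(1,2) mult_power_less_square[OF assms(3,1)]
    unfolding u_def r_def P_def by simp
qed

lemma mult_power_mod_inside_high:
  fixes q t s x :: nat
  assumes "3 \<le> q" "0 < s" "s < t" "\<not> q dvd x" "x < q * q ^ t"
    and "x div q ^ (t - 1) * (q ^ (t - 1) + 1) + 1 < q * q ^ t"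
  shows "x * q ^ (t + s) mod (q ^ t * q ^ t + 1) \<in> {x<..<q ^ t * q ^ t + 1 - x}"
proof -
  have "x < x * q ^ (t + s) mod (q ^ t * q ^ t + 1)"
  proof (cases "s = 1")
    case True
    then show ?thesis
      using assms(3-6) mult_power_mod_next_above[of t q x] by simp
  next
    case False
    then show ?thesis
      using assms(1-5) by (intro mult_power_mod_high_above) auto
  qed
  moreover have "x * q ^ (t + s) mod (q ^ t * q ^ t + 1) + x < q ^ t * q ^ t + 1"
    using assms(2-5) by (rule mult_power_mod_high_below)
  ultimately show ?thesis
    by (simp add: less_diff_conv)
qed

(* The conditions low, middle and high keep x q^j mod N strictly between x and N - x for j < t,
   j = t and j = t + 1 respectively; for t + 1 < j < 2t this holds automatically. *)
lemma coset_leader_if_digit_conditions: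
  fixes q t x :: nat
  assumes "3 \<le> q" "2 \<le> t" "\<not> q dvd x" "x < q * q ^ t"
    and low: "x * q ^ (t - 1) + x < q ^ t * q ^ t + 1"
    and middle: "x div q ^ t < x mod q ^ t" "x div q ^ t + x mod q ^ t < q ^ t"
    and high: "x div q ^ (t - 1) * (q ^ (t - 1) + 1) + 1 < q * q ^ t"
  shows "coset_leader q (q ^ t * q ^ t + 1) x \<and> card (cyc_coset q (q ^ t * q ^ t + 1) x) = 2 * (2 * t)"
proof (rule coset_leader_if_strictly_inside)
  have "q * q \<le> q ^ t"
    using assms(1,2) power_increasing[of 2 t q] by (simp add: power2_eq_square)
  moreover have "2 * q \<le> q * q"
    using assms(1) by (intro mult_le_mono1) linarith
  ultimately have "2 * q \<le> q ^ t"
    by linarith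
  then have "2 * q * q ^ t \<le> q ^ t * q ^ t"
    by (rule mult_le_mono1)
  then show "2 * x < q ^ t * q ^ t + 1"
    using assms(4) by linarith
  show "0 < x"
    using assms(3) by (cases x) auto
  show "x * q ^ j mod (q ^ t * q ^ t + 1) \<in> {x<..<q ^ t * q ^ t + 1 - x}"
    if "0 < j" "j < 2 * t" for j
  proof -
    consider (small) "j < t" | (half) "j = t" | (large) "t < j"
      by linarith
    then show ?thesis
    proof cases
      case small
      then show ?thesis
        using assms(1) \<open>0 < x\<close> \<open>0 < j\<close> low by (intro mult_power_mod_inside_low) auto
    next
      case half
      have "x div q ^ t < q"
        using assms(4) by (simp add: less_mult_imp_div_less)
      then have "2 * (x div q ^ t) + 2 \<le> q ^ t"
        using \<open>2 * q \<le> q ^ t\<close> by linarith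
      then show ?thesis
        using mult_mod_square_plus_one_inside[OF middle] half by simp
    next
      case large
      then have "x * q ^ (t + (j - t)) mod (q ^ t * q ^ t + 1) \<in> {x<..<q ^ t * q ^ t + 1 - x}"
        using assms(1,3,4) high that(2) by (intro mult_power_mod_inside_high) auto
      then show ?thesis
        using large by simp
    qed
  qed
qed (use assms(2) square_power_plus_one_dvd in simp_all)

section \<open>The exceptional sets\<close>

lemma double_less_power_if_le_half:
  fixes q t a :: nat
  assumes "odd q" "0 < t" "a \<le> (q - 1) div 2"
  shows "2 * a < q ^ t"
proof -
  have "2 * a < q"
    using assms(1,3) by presburger
  also have "q \<le> q ^ t"
    using odd_pos[OF assms(1)] assms(2) by (simp add: Suc_leI self_le_power)
  finally show ?thesis .
qed

lemma not_coset_leader_X1: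
  fixes q t i :: nat
  assumes "odd q" "0 < t" "i \<in> X1 q t"
  shows "\<not> coset_leader q (q ^ t * q ^ t + 1) (2 * i)"
proof -
  obtain a b where i: "i = a * q ^ t + b" and "1 \<le> b" "b \<le> a" "a \<le> (q - 1) div 2"
    using assms(3) unfolding X1_def by blast
  have "2 * a < q ^ t"
    using assms(1,2) \<open>a \<le> (q - 1) div 2\<close> by (rule double_less_power_if_le_half)
  then have "\<not> coset_leader q (q ^ t * q ^ t + 1) (2 * a * q ^ t + 2 * b)"
    using \<open>1 \<le> b\<close> \<open>b \<le> a\<close> by (intro not_coset_leader_if_low_digit_le) auto
  then show ?thesis
    unfolding i by (simp add: algebra_simps)
qed

lemma not_coset_leader_X2:
  fixes q t i :: nat
  assumes "odd q" "0 < t" "i \<in> X2 q t"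
  shows "\<not> coset_leader q (q ^ t * q ^ t + 1) (2 * i)"
proof -
  obtain a b where i: "i = a * q ^ t - b" and "1 \<le> b" "b < a" "a \<le> (q - 1) div 2"
    using assms(3) unfolding X2_def by blast
  have "2 * a < q ^ t"
    using assms(1,2) \<open>a \<le> (q - 1) div 2\<close> by (rule double_less_power_if_le_half)
  have "1 * q ^ t \<le> a * q ^ t"
    using \<open>b < a\<close> by (intro mult_le_mono1) simp
  then have "2 * i = (2 * a - 1) * q ^ t + (q ^ t - 2 * b)"
    unfolding i using \<open>b < a\<close> \<open>2 * a < q ^ t\<close> by (simp add: algebra_simps diff_mult_distrib)
  moreover have "\<not> coset_leader q (q ^ t * q ^ t + 1) ((2 * a - 1) * q ^ t + (q ^ t - 2 * b))"
    using \<open>1 \<le> b\<close> \<open>b < a\<close> \<open>2 * a < q ^ t\<close> by (intro not_coset_leader_if_digit_sum_gt) auto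
  ultimately show ?thesis
    by simp
qed

lemma not_coset_leader_X3:
  fixes q t i :: nat
  assumes "odd q" "0 < t" "i \<in> X3 q t"
  shows "\<not> coset_leader q (q ^ t * q ^ t + 1) (2 * i)"
proof -
  define Q where "Q = q ^ t"
  have half: "2 * ((Q + 1) div 2) = Q + 1" "2 * ((Q - 1) div 2) = Q - 1"
    unfolding Q_def using assms(1) by simp_all
  from assms(3) consider
      (plus) a b where "i = a * Q + (Q - 1) div 2 + b" "1 \<le> b" "b \<le> a" "a < (q - 1) div 2"
    | (minus) a b where "i = a * Q + (Q + 1) div 2 - b" "1 \<le> b" "b \<le> a" "a < (q - 1) div 2"
    unfolding X3_def Q_def by blast
  then show ?thesis
  proof cases
    case (plus a b)
    have "2 * (a + 1) < Q"
      unfolding Q_def using assms(1,2) plus(4) by (intro double_less_power_if_le_half) auto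
    moreover have "2 * i = (2 * a + 1) * Q + (2 * b - 1)"
      using plus(1,2) half(2) \<open>2 * (a + 1) < Q\<close> by (simp add: algebra_simps)
    ultimately show ?thesis
      using plus(2,3) not_coset_leader_if_low_digit_le[of "2 * b - 1" "2 * a + 1" q t]
      unfolding Q_def by simp
  next
    case (minus a b)
    have "2 * (a + 1) < Q"
      unfolding Q_def using assms(1,2) minus(4) by (intro double_less_power_if_le_half) auto
    moreover have "2 * i = 2 * a * Q + (Q + 1 - 2 * b)"
      using minus(1,2,3) half(1) \<open>2 * (a + 1) < Q\<close> by (simp add: algebra_simps)
    ultimately show ?thesis
      using minus(2,3) not_coset_leader_if_digit_sum_gt[of "Q + 1 - 2 * b" q t "2 * a"]
      unfolding Q_def by simp
  qed
qed

lemma not_coset_leader_X4: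
  fixes q t i :: nat
  assumes "odd q" "0 < t" "i \<in> X4 q t"
  shows "\<not> coset_leader q (q ^ t * q ^ t + 1) (2 * i)"
proof -
  obtain a where i: "i = a * (q ^ t + 1) + (q ^ t + 1) div 2" and "a < (q - 1) div 2"
    using assms(3) unfolding X4_def by blast
  have "2 * (a + 1) < q ^ t"
    using assms(1,2) \<open>a < (q - 1) div 2\<close> by (intro double_less_power_if_le_half) auto
  moreover have "2 * i = (2 * a + 1) * q ^ t + (2 * a + 1)"
    unfolding i using assms(1) by (simp add: algebra_simps)
  ultimately show ?thesis
    using not_coset_leader_if_low_digit_le[of "2 * a + 1" "2 * a + 1" q t] by simp
qed

lemma not_coset_leader_X5:
  fixes q t i :: nat
  assumes "4 \<le> t" "i \<in> X5 q t"
  shows "\<not> coset_leader q (q ^ t * q ^ t + 1) (2 * i)"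
proof -
  define P where "P = q ^ (t - 1)"
  define A where "A = q * q ^ t"
  define B where "B = q * q"
  have lo: "(A - B) div 2 + 1 \<le> i" and hi: "i \<le> (A - 1) div 2" and "\<not> q dvd i"
    using assms(2) unfolding X5_def A_def B_def by (simp_all add: power2_eq_square)
  have "q \<noteq> 0"
  proof
    assume "q = 0"
    then have "i = 0"
      using hi unfolding A_def by simp
    with \<open>q = 0\<close> \<open>\<not> q dvd i\<close> show False
      by simp
  qed
  moreover have "q \<noteq> 1"
    using \<open>\<not> q dvd i\<close> by auto
  ultimately have "2 \<le> q"
    by linarith
  have qP: "q * P = q ^ t"
    unfolding P_def using assms(1) by (simp flip: power_Suc)
  have "B * 1 < B * q"
    unfolding B_def using \<open>2 \<le> q\<close> by (intro mult_less_mono2) auto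
  also have "\<dots> \<le> P"
    unfolding B_def P_def using \<open>2 \<le> q\<close> assms(1) power_increasing[of 3 "t - 1" q]
    by (simp add: power3_eq_cube)
  finally have "B < P"
    by simp
  have "A = B * P" "A * P = q ^ t * q ^ t"
    unfolding A_def B_def by (simp_all flip: qP add: algebra_simps)
  have "B \<le> A"
    using \<open>A = B * P\<close> \<open>B < P\<close> by simp
  then have bounds: "A + 1 \<le> 2 * i + B" "2 * i + 1 \<le> A"
    using lo hi by presburger+
  have "(2 * i + 1) * P \<le> A * P"
    using bounds(2) by (rule mult_le_mono1)
  moreover have "(A + 1) * (P + 1) \<le> (2 * i + B) * (P + 1)"
    using bounds(1) by (rule mult_le_mono1)
  ultimately have "2 * i * P < q ^ t * q ^ t + 1" "q ^ t * q ^ t + 1 < 2 * i * P + 2 * i"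
    using \<open>A = B * P\<close> \<open>A * P = q ^ t * q ^ t\<close> \<open>B < P\<close> by (simp_all add: algebra_simps)
  then have "q ^ t * q ^ t + 1 < 2 * i * q ^ (t - 1) mod (q ^ t * q ^ t + 1) + 2 * i"
    unfolding P_def by simp
  then show ?thesis
    by (rule not_coset_leader_if_antipode_less[OF square_power_plus_one_dvd])
qed

lemma X5_if_not_low_condition:
  fixes q t i :: nat
  assumes "0 < t" "i \<le> (q ^ (t + 1) - 1) div 2" "\<not> q dvd i"
    and "q ^ t * q ^ t + 1 \<le> 2 * i * q ^ (t - 1) + 2 * i"
  shows "i \<in> X5 q t"
proof -
  define P where "P = q ^ (t - 1)"
  define A where "A = q * q ^ t"
  define B where "B = q * q"
  have qP: "q * P = q ^ t"
    unfolding P_def using assms(1) by (simp flip: power_Suc)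
  have "A = B * P" "A * P = q ^ t * q ^ t"
    unfolding A_def B_def by (simp_all flip: qP add: algebra_simps)
  have "A < 2 * i + B"
  proof (rule ccontr)
    assume "\<not> A < 2 * i + B"
    then have "(2 * i + B) * (P + 1) \<le> A * (P + 1)"
      by (intro mult_le_mono1) simp
    then have "2 * i * P + 2 * i + B \<le> q ^ t * q ^ t"
      using \<open>A = B * P\<close> \<open>A * P = q ^ t * q ^ t\<close> by (simp add: algebra_simps)
    then show False
      using assms(4) unfolding P_def by linarith
  qed
  moreover have "0 < i"
    using assms(3) by (cases i) auto
  ultimately have "(A - B) div 2 + 1 \<le> i"
    by presburger
  then show ?thesis
    using assms(2,3) unfolding X5_def A_def B_def by (simp add: power2_eq_square)
qed

lemma digits_of_double:
  fixes q t i :: nat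
  assumes "odd q" "0 < t" "\<not> q dvd i"
  shows "0 < 2 * i mod q ^ t" "even (2 * i div q ^ t) \<longleftrightarrow> even (2 * i mod q ^ t)"
proof -
  have "\<not> q dvd 2 * i"
    using assms(1,3) by (simp add: coprime_dvd_mult_right_iff)
  then show "0 < 2 * i mod q ^ t"
    using assms(2) by (rule mod_power_pos_if_not_dvd)
  have "even (2 * i div q ^ t * q ^ t + 2 * i mod q ^ t)"
    unfolding div_mult_mod_eq by simp
  moreover have "odd (q ^ t)"
    using assms(1) by simp
  ultimately show "even (2 * i div q ^ t) \<longleftrightarrow> even (2 * i mod q ^ t)"
    by (metis even_add even_mult_iff)
qed

lemma double_less_if_le_half_pred: "i \<le> (a - 1) div 2 \<Longrightarrow> 0 < a \<Longrightarrow> 2 * i < (a :: nat)"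
  by presburger

lemma X3_X4_if_odd_digits:
  fixes q t i a c :: nat
  assumes "odd q" "2 * i = (2 * a + 1) * q ^ t + (2 * c + 1)" "c \<le> a" "2 * a + 1 < q"
  shows "i \<in> X3 q t \<union> X4 q t"
proof -
  define Q where "Q = q ^ t"
  have "0 < Q"
    unfolding Q_def using odd_pos[OF assms(1)] by simp
  have half: "2 * ((Q + 1) div 2) = Q + 1" "2 * ((Q - 1) div 2) = Q - 1"
    unfolding Q_def using assms(1) by simp_all
  have i: "i = a * Q + (Q + 1) div 2 + c"
    using assms(2) half(1) unfolding Q_def[symmetric] by (simp add: algebra_simps)
  have "a < (q - 1) div 2"
    using assms(1,4) by presburger
  show ?thesis
  proof (cases "c = a")
    case True
    then have "i = a * (Q + 1) + (Q + 1) div 2"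
      using i by (simp add: algebra_simps)
    then show ?thesis
      using \<open>a < (q - 1) div 2\<close> unfolding X4_def Q_def by blast
  next
    case False
    have "i = a * Q + (Q - 1) div 2 + (c + 1)"
      using i half \<open>0 < Q\<close> by linarith
    moreover have "1 \<le> c + 1" "c + 1 \<le> a"
      using assms(3) False by auto
    ultimately show ?thesis
      using \<open>a < (q - 1) div 2\<close> unfolding X3_def Q_def by blast
  qed
qed

lemma X1_X3_X4_if_low_digit_le:
  fixes q t i :: nat
  assumes "odd q" "0 < t" "\<not> q dvd i" "2 * i < q * q ^ t"
    and "2 * i mod q ^ t \<le> 2 * i div q ^ t"
  shows "i \<in> X1 q t \<union> X3 q t \<union> X4 q t"
proof -
  define Q where "Q = q ^ t"
  define u where "u = 2 * i div Q"
  define v where "v = 2 * i mod Q"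
  have x: "2 * i = u * Q + v"
    unfolding u_def v_def by simp
  have "0 < v" and parity: "even u \<longleftrightarrow> even v"
    using digits_of_double[OF assms(1-3)] unfolding u_def v_def Q_def by simp_all
  have "v \<le> u" "u < q"
    using assms(4,5) unfolding u_def v_def Q_def by (simp_all add: less_mult_imp_div_less)
  show ?thesis
  proof (cases "even u")
    case True
    then obtain a c where "u = 2 * a" "v = 2 * c"
      using parity by (metis evenE)
    moreover have "2 * ((q - 1) div 2) = q - 1"
      using assms(1) by simp
    ultimately have "i = a * Q + c" "1 \<le> c" "c \<le> a" "a \<le> (q - 1) div 2"
      using x \<open>0 < v\<close> \<open>v \<le> u\<close> \<open>u < q\<close> by auto
    then show ?thesis
      unfolding X1_def Q_def by blast
  next
    case False
    then obtain a c where "u = 2 * a + 1" "v = 2 * c + 1"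
      using parity by (metis oddE)
    then have "i \<in> X3 q t \<union> X4 q t"
      using x \<open>v \<le> u\<close> \<open>u < q\<close> unfolding Q_def by (intro X3_X4_if_odd_digits[OF assms(1)]) auto
    then show ?thesis
      by blast
  qed
qed

lemma X5_if_top_digit:
  fixes q t i :: nat
  assumes "odd q" "i \<le> (q ^ (t + 1) - 1) div 2" "\<not> q dvd i"
    and "2 * i div q ^ t = q - 1" "q ^ t < 2 * i div q ^ t + 2 * i mod q ^ t"
  shows "i \<in> X5 q t"
proof -
  define Q where "Q = q ^ t"
  define u where "u = 2 * i div Q"
  define v where "v = 2 * i mod Q"
  have "u * Q + Q = q * Q"
    using assms(4) odd_pos[OF assms(1)] unfolding u_def Q_def by (cases q) simp_all
  moreover have "2 * i = u * Q + v"
    unfolding u_def v_def by simp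
  moreover have "u < q" "q * 1 \<le> q * q"
    using assms(4) odd_pos[OF assms(1)] unfolding u_def Q_def by simp_all
  ultimately have "q * Q < 2 * i + q * q"
    using assms(5) unfolding u_def v_def Q_def by linarith
  moreover have "0 < i"
    using assms(3) by (cases i) auto
  ultimately have "(q * Q - q * q) div 2 + 1 \<le> i"
    by presburger
  then show ?thesis
    using assms(2,3) unfolding X5_def Q_def by (simp add: power2_eq_square)
qed

lemma X2_X3_if_digit_sum_gt:
  fixes q t i :: nat
  assumes "odd q" "0 < t" "\<not> q dvd i"
    and "2 * i div q ^ t < q - 1" "q ^ t < 2 * i div q ^ t + 2 * i mod q ^ t"
  shows "i \<in> X2 q t \<union> X3 q t"
proof -
  define Q where "Q = q ^ t"
  define u where "u = 2 * i div Q"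
  define v where "v = 2 * i mod Q"
  define c where "c = Q - v"
  have "0 < Q"
    unfolding Q_def using odd_pos[OF assms(1)] by simp
  then have "v < Q"
    unfolding v_def by simp
  moreover have "2 * i = u * Q + v"
    unfolding u_def v_def by simp
  moreover have "Q < u + v"
    using assms(5) unfolding u_def v_def Q_def .
  ultimately have x: "2 * i = u * Q + (Q - c)" "1 \<le> c" "c + 1 \<le> u" "c \<le> Q"
    unfolding c_def by auto
  have parity: "even u \<longleftrightarrow> odd c"
    using digits_of_double[OF assms(1-3)] assms(1) \<open>v < Q\<close> unfolding u_def v_def c_def Q_def
    by simp
  have half: "2 * ((q - 1) div 2) = q - 1" "2 * ((Q + 1) div 2) = Q + 1"
    unfolding Q_def using assms(1) by simp_all
  show ?thesis
  proof (cases "even u")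
    case False
    then obtain a where a: "u = 2 * a + 1"
      by (rule oddE)
    obtain b where b: "c = 2 * b"
      using False parity by (metis evenE)
    have "i + b = (a + 1) * Q"
      using x(1,4) a b by (simp add: algebra_simps)
    then have "i = (a + 1) * Q - b"
      by simp
    moreover have "1 \<le> b" "b < a + 1" "a + 1 \<le> (q - 1) div 2"
      using a b x(2,3) assms(4) half(1) unfolding u_def Q_def by linarith+
    ultimately show ?thesis
      unfolding X2_def Q_def by blast
  next
    case True
    then obtain a where a: "u = 2 * a"
      by (rule evenE)
    obtain b where b: "c = 2 * b + 1"
      using True parity by (metis oddE)
    have "i + (b + 1) = a * Q + (Q + 1) div 2"
      using x(1,4) a b half(2) by (simp add: algebra_simps)
    then have "i = a * Q + (Q + 1) div 2 - (b + 1)"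
      by simp
    moreover have "1 \<le> b + 1" "b + 1 \<le> a" "a < (q - 1) div 2"
      using a b x(3) assms(4) half(1) unfolding u_def Q_def by linarith+
    ultimately show ?thesis
      unfolding X3_def Q_def by blast
  qed
qed

lemma X2_X3_X5_if_digit_sum_ge:
  fixes q t i :: nat
  assumes "odd q" "0 < t" "\<not> q dvd i" "i \<le> (q ^ (t + 1) - 1) div 2"
    and "q ^ t \<le> 2 * i div q ^ t + 2 * i mod q ^ t"
  shows "i \<in> X2 q t \<union> X3 q t \<union> X5 q t"
proof -
  have "odd (q ^ t)" "even (2 * i div q ^ t + 2 * i mod q ^ t)"
    using assms(1) digits_of_double[OF assms(1-3)] by simp_all
  then have sum: "q ^ t < 2 * i div q ^ t + 2 * i mod q ^ t"
    using assms(5) by (metis le_neq_implies_less)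
  have "2 * i < q * q ^ t"
    using assms(4) odd_pos[OF assms(1)] by (intro double_less_if_le_half_pred) simp_all
  then have "2 * i div q ^ t < q"
    by (simp add: less_mult_imp_div_less)
  then consider "2 * i div q ^ t = q - 1" | "2 * i div q ^ t < q - 1"
    by linarith
  then show ?thesis
  proof cases
    case 1
    then show ?thesis
      using X5_if_top_digit[OF assms(1,4,3) _ sum] by simp
  next
    case 2
    then show ?thesis
      using X2_X3_if_digit_sum_gt[OF assms(1-3) _ sum] by simp
  qed
qed

lemma high_condition_if_bounded:
  fixes q t x c :: nat
  assumes "x < c * q ^ (t - 1)" "c * q ^ (t - 1) + c < q * q ^ t + q ^ (t - 1)"
  shows "x div q ^ (t - 1) * (q ^ (t - 1) + 1) + 1 < q * q ^ t"
proof -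
  have "x div q ^ (t - 1) < c"
    using assms(1) by (simp add: less_mult_imp_div_less)
  then have "(x div q ^ (t - 1) + 1) * (q ^ (t - 1) + 1) \<le> c * (q ^ (t - 1) + 1)"
    by (intro mult_le_mono1) simp
  then show ?thesis
    using assms(2) unfolding add_mult_distrib add_mult_distrib2 by linarith
qed

lemma coset_leader_double_first_range:
  fixes q t i :: nat
  assumes "odd q" "3 \<le> q" "2 \<le> t" "(q ^ t + 1) div 2 < i" "i < q ^ t + 1" "\<not> q dvd i"
  shows "coset_leader q (q ^ t * q ^ t + 1) (2 * i)
    \<and> card (cyc_coset q (q ^ t * q ^ t + 1) (2 * i)) = 2 * (2 * t)"
proof (rule coset_leader_if_digit_conditions)
  define Q where "Q = q ^ t"
  define P where "P = q ^ (t - 1)"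
  have qP: "q * P = Q"
    unfolding P_def Q_def using assms(3) by (simp flip: power_Suc)
  have "q ^ 1 \<le> P"
    unfolding P_def using assms(2,3) by (intro power_increasing) auto
  then have "2 * q \<le> q * P" "2 * Q \<le> Q * P"
    using assms(2) by (simp_all add: mult_le_mono1 mult_le_mono2)
  have "3 * Q \<le> q * Q"
    using assms(2) by (simp add: mult_le_mono1)
  have "q dvd Q"
    unfolding Q_def using assms(3) by simp
  then have "i \<noteq> Q"
    using assms(6) by auto
  moreover have "2 * ((Q + 1) div 2) = Q + 1"
    unfolding Q_def using assms(1) by simp
  ultimately have x: "Q + 1 < 2 * i" "i < Q"
    using assms(4,5) unfolding Q_def[symmetric] by linarith+
  show "\<not> q dvd 2 * i"
    using assms(1,6) by (simp add: coprime_dvd_mult_right_iff)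
  show "2 * i < q * q ^ t"
    using x \<open>3 * Q \<le> q * Q\<close> unfolding Q_def by linarith
  have "2 * i div Q = 1" "2 * i mod Q = 2 * i - Q"
    using x by (simp_all add: div_if mod_if)
  then show "2 * i div q ^ t < 2 * i mod q ^ t" "2 * i div q ^ t + 2 * i mod q ^ t < q ^ t"
    using x unfolding Q_def by simp_all
  have "2 * i * (P + 1) < 2 * Q * (P + 1)"
    using x by (intro mult_less_mono1) simp_all
  moreover have "Q * Q = q * (Q * P)"
    using qP by (simp add: algebra_simps)
  moreover have "3 * (Q * P) \<le> q * (Q * P)"
    using assms(2) by (simp add: mult_le_mono1)
  ultimately show "2 * i * q ^ (t - 1) + 2 * i < q ^ t * q ^ t + 1"
    using \<open>2 * Q \<le> Q * P\<close> unfolding P_def[symmetric] Q_def[symmetric] add_mult_distrib2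
    by linarith
  show "2 * i div q ^ (t - 1) * (q ^ (t - 1) + 1) + 1 < q * q ^ t"
  proof (rule high_condition_if_bounded)
    show "2 * i < 2 * q * q ^ (t - 1)"
      using x qP unfolding P_def by (simp add: mult.assoc)
    have "0 < P"
      using \<open>q ^ 1 \<le> P\<close> assms(2) by simp
    moreover have "2 * q * P = 2 * Q"
      using qP by (simp add: mult.assoc)
    ultimately show "2 * q * q ^ (t - 1) + 2 * q < q * q ^ t + q ^ (t - 1)"
      using \<open>2 * q \<le> q * P\<close> \<open>3 * Q \<le> q * Q\<close> qP
      unfolding P_def[symmetric] Q_def[symmetric] by linarith
  qed
qed (use assms in simp_all)

lemma coset_leader_double_second_range:
  fixes q t i :: nat
  assumes "odd q" "3 \<le> q" "4 \<le> t" "i \<le> (q ^ (t + 1) - 1) div 2" "\<not> q dvd i"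
    and "i \<notin> X1 q t \<union> X2 q t \<union> X3 q t \<union> X4 q t \<union> X5 q t"
  shows "coset_leader q (q ^ t * q ^ t + 1) (2 * i)
    \<and> card (cyc_coset q (q ^ t * q ^ t + 1) (2 * i)) = 2 * (2 * t)"
proof (rule coset_leader_if_digit_conditions)
  have "0 < t"
    using assms(3) by simp
  show "\<not> q dvd 2 * i"
    using assms(1,5) by (simp add: coprime_dvd_mult_right_iff)
  show "2 * i < q * q ^ t"
    using assms(2,4) by (intro double_less_if_le_half_pred) simp_all
  show "2 * i * q ^ (t - 1) + 2 * i < q ^ t * q ^ t + 1"
    using X5_if_not_low_condition[OF \<open>0 < t\<close> assms(4,5)] assms(6) not_less by blast
  show "2 * i div q ^ t < 2 * i mod q ^ t"
    using X1_X3_X4_if_low_digit_le[OF assms(1) \<open>0 < t\<close> assms(5) \<open>2 * i < q * q ^ t\<close>] assms(6)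
      not_less by blast
  show "2 * i div q ^ t + 2 * i mod q ^ t < q ^ t"
    using X2_X3_X5_if_digit_sum_ge[OF assms(1) \<open>0 < t\<close> assms(5,4)] assms(6) not_less by blast
  define P where "P = q ^ (t - 1)"
  have "q * P = q ^ t"
    unfolding P_def using assms(3) by (simp flip: power_Suc)
  have "q * q * 1 < q * q * q"
    using assms(2) by (intro mult_less_mono2) auto
  also have "\<dots> \<le> P"
    unfolding P_def using assms(2,3) power_increasing[of 3 "t - 1" q] by (simp add: power3_eq_cube)
  finally have "q * q < P"
    by simp
  show "2 * i div q ^ (t - 1) * (q ^ (t - 1) + 1) + 1 < q * q ^ t"
  proof (rule high_condition_if_bounded)
    show "2 * i < q * q * q ^ (t - 1)"
      using \<open>2 * i < q * q ^ t\<close> \<open>q * P = q ^ t\<close> unfolding P_def by (simp add: mult.assoc)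
    show "q * q * q ^ (t - 1) + q * q < q * q ^ t + q ^ (t - 1)"
      using \<open>q * q < P\<close> \<open>q * P = q ^ t\<close> unfolding P_def by (simp add: mult.assoc)
  qed
qed (use assms in simp_all)

lemma not_coset_leader_double_ends:
  fixes q t :: nat
  assumes "odd q" "3 \<le> q" "0 < t"
  shows "\<not> coset_leader q (q ^ t * q ^ t + 1) (2 * ((q ^ t + 1) div 2))"
    and "\<not> coset_leader q (q ^ t * q ^ t + 1) (2 * (q ^ t + 1))"
proof -
  have "3 \<le> q ^ t"
    using assms(2,3) self_le_power[of q t] by simp
  then have "\<not> coset_leader q (q ^ t * q ^ t + 1) (1 * q ^ t + 1)"
    and "\<not> coset_leader q (q ^ t * q ^ t + 1) (2 * q ^ t + 2)"
    by (intro not_coset_leader_if_low_digit_le; simp)+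
  moreover have "2 * ((q ^ t + 1) div 2) = 1 * q ^ t + 1" "2 * (q ^ t + 1) = 2 * q ^ t + 2"
    using assms(1) by simp_all
  ultimately show "\<not> coset_leader q (q ^ t * q ^ t + 1) (2 * ((q ^ t + 1) div 2))"
    and "\<not> coset_leader q (q ^ t * q ^ t + 1) (2 * (q ^ t + 1))"
    by simp_all
qed

lemma not_coset_leader_double_X:
  fixes q t i :: nat
  assumes "odd q" "4 \<le> t" "i \<in> X1 q t \<union> X2 q t \<union> X3 q t \<union> X4 q t \<union> X5 q t"
  shows "\<not> coset_leader q (q ^ t * q ^ t + 1) (2 * i)"
  using assms not_coset_leader_X1[OF assms(1)] not_coset_leader_X2[OF assms(1)]
    not_coset_leader_X3[OF assms(1)] not_coset_leader_X4[OF assms(1)] not_coset_leader_X5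
  by auto

theorem lemma14:
  fixes q p k t m n :: nat
  assumes "prime p" and "k \<ge> 1" and "q = p ^ k" and "odd q"
    and "m = 2 * t" and "n = (q ^ m + 1) div 2"
  shows "(m \<ge> 4 \<longrightarrow>
           (\<forall>i. (q ^ t + 1) div 2 \<le> i \<and> i \<le> q ^ t + 1 \<and> \<not> q dvd i
                 \<and> i \<notin> {(q ^ t + 1) div 2, q ^ t + 1}
                 \<longrightarrow> coset_leader q n i \<and> card (cyc_coset q n i) = 2 * m)
           \<and> \<not> coset_leader q n ((q ^ t + 1) div 2)
           \<and> \<not> coset_leader q n (q ^ t + 1))
       \<and> (m \<ge> 8 \<longrightarrow>
           (\<forall>i. (q ^ t + 1) div 2 \<le> i \<and> i \<le> (q ^ (t + 1) - 1) div 2 \<and> \<not> q dvd i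
                 \<and> i \<notin> X1 q t \<union> X2 q t \<union> X3 q t \<union> X4 q t \<union> X5 q t
                 \<longrightarrow> coset_leader q n i \<and> card (cyc_coset q n i) = 2 * m)
           \<and> (\<forall>i. (q ^ t + 1) div 2 \<le> i \<and> i \<le> (q ^ (t + 1) - 1) div 2 \<and> \<not> q dvd i
                 \<and> i \<in> X1 q t \<union> X2 q t \<union> X3 q t \<union> X4 q t \<union> X5 q t
                 \<longrightarrow> \<not> coset_leader q n i))"
proof -
  have "2 \<le> p"
    using assms(1) by (rule prime_ge_2_nat)
  then have "2 \<le> q"
    using self_le_power[of p k] assms(2,3) by simp
  then have "3 \<le> q"
    using assms(4) by (cases "q = 2") auto
  have "q ^ t * q ^ t + 1 = 2 * n"
    unfolding assms(5,6) using assms(4) by (simp add: power_mult_distrib flip: power_add mult_2)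
  then have leader: "coset_leader q n i \<longleftrightarrow> coset_leader q (q ^ t * q ^ t + 1) (2 * i)"
    and card: "card (cyc_coset q n i) = card (cyc_coset q (q ^ t * q ^ t + 1) (2 * i))" for i
    by (simp_all add: coset_leader_mult_iff card_cyc_coset_mult)
  show ?thesis
    unfolding leader card assms(5)
    using coset_leader_double_first_range[OF assms(4) \<open>3 \<le> q\<close>]
      not_coset_leader_double_ends[OF assms(4) \<open>3 \<le> q\<close>]
      coset_leader_double_second_range[OF assms(4) \<open>3 \<le> q\<close>]
      not_coset_leader_double_X[OF assms(4)]
    by auto
qed

end
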